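(* Let $(X,A,\prec)$ be an alignment of the family $\{(X_a,\prec_a)\}_{a\in I}$, let $\mathfrak{P}=\{I_1,\dots,I_p\}$ be a partition of $I$ and $X_k=\dot\bigcup_{a\in I_k}X_a$. For each $k$ let $Z_k$ be the set of nonempty sets $Q\cap X_k$, $Q\in\mathcal{C}(X,A)$ (the columns of $(X,A)[X_k]$), strictly partially ordered by $P\cap X_k\prec_k Q\cap X_k$ iff $P\prec Q$. Let $(X,A)/\mathfrak{P}$ be the graph whose vertex set is $\dot\bigcup_k Z_k$ (elements of $Z_k$ written $(k,Q\cap X_k)$) and whose edges are the pairs $\{(k,Q\cap X_k),(l,Q\cap X_l)\}$ with $k\neq l$, $Q\in\mathcal{C}(X,A)$ and both $Q\cap X_k$, $Q\cap X_l$ nonempty. Its connected components are exactly the sets $Q/\mathfrak{P}=\{(k,Q\cap X_k): Q\cap X_k\neq\emptyset\}$, $Q\in\mathcal{C}(X,A)$, in bijection with $\mathcal{C}(X,A)$; order them by $P/\mathfrak{P}\prec' Q/\mathfrak{P}$ iff $P\prec Q$. Then $((X,A)/\mathfrak{P},\prec')$ is an alignment of the family of posets $\{(Z_k,\prec_k)\}_{k=1}^p$.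
   Context: Let $I$ be a finite index set ("rows"), and for each $a\in I$ let $(X_a,\prec_a)$ be a finite set with a strict partial order. Elements of $X_a$ are written $(a,i)$, and $X=\dot\bigcup_{a\in I}X_a$. For a simple undirected graph $(X,A)$, $\mathcal{C}(X,A)$ denotes its set of connected components ("columns"). An alignment of a family of finite strict posets $(X_a,\prec_a)$ is a triple $(X,A,\prec)$ where $\prec$ is a strict partial order on $\mathcal{C}(X,A)$ such that: (P1) every $Q\in\mathcal{C}(X,A)$ induces a complete subgraph of $(X,A)$; (P2) if $(a,i)\in Q$ and $(a,j)\in Q$ then $i=j$; (P3) if $(a,i)\in P$, $(a,j)\in Q$ and $(a,i)\prec_a(a,j)$ then $P\prec Q$; (P4) if $P\prec Q$, $(a,i)\in P$ and $(a,j)\in Q$, then $(a,i)\prec_a(a,j)$ or $(a,i)$ and $(a,j)$ are incomparable w.r.t. $\prec_a$. *)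

theory Defs
  imports Main
begin

definition simple_graph :: "'v set \<Rightarrow> 'v set set \<Rightarrow> bool" where
  "simple_graph V E \<longleftrightarrow> (\<forall>e\<in>E. \<exists>x y. x \<noteq> y \<and> x \<in> V \<and> y \<in> V \<and> e = {x, y})"

definition adj :: "'v set \<Rightarrow> 'v set set \<Rightarrow> ('v \<times> 'v) set" where
  "adj V E = {(x, y). x \<in> V \<and> y \<in> V \<and> {x, y} \<in> E}"

definition components :: "'v set \<Rightarrow> 'v set set \<Rightarrow> 'v set set" where
  "components V E = {{y \<in> V. (x, y) \<in> (adj V E)\<^sup>*} | x. x \<in> V}"

definition poset_family :: "'r set \<Rightarrow> ('r \<Rightarrow> ('r \<times> 'e) set) \<Rightarrow> ('r \<Rightarrow> (('r \<times> 'e) \<times> ('r \<times> 'e)) set) \<Rightarrow> bool" where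
  "poset_family I Xs R \<longleftrightarrow> finite I \<and>
     (\<forall>a\<in>I. finite (Xs a) \<and> Xs a \<subseteq> {a} \<times> UNIV \<and> R a \<subseteq> Xs a \<times> Xs a
        \<and> (\<forall>x. (x, x) \<notin> R a) \<and> trans (R a))"

definition alignment :: "'r set \<Rightarrow> ('r \<Rightarrow> ('r \<times> 'e) set) \<Rightarrow> ('r \<Rightarrow> (('r \<times> 'e) \<times> ('r \<times> 'e)) set)
     \<Rightarrow> ('r \<times> 'e) set set \<Rightarrow> (('r \<times> 'e) set \<times> ('r \<times> 'e) set) set \<Rightarrow> bool" where
  "alignment I Xs R A prec \<longleftrightarrow>
     (let X = (\<Union>a\<in>I. Xs a); C = components X A in
       poset_family I Xs R \<and> simple_graph X A \<and>
       prec \<subseteq> C \<times> C \<and> (\<forall>Q. (Q, Q) \<notin> prec) \<and> trans prec \<and>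
       (\<forall>Q\<in>C. \<forall>x\<in>Q. \<forall>y\<in>Q. x \<noteq> y \<longrightarrow> {x, y} \<in> A) \<and>
       (\<forall>Q\<in>C. \<forall>a\<in>I. \<forall>x\<in>Xs a. \<forall>y\<in>Xs a. x \<in> Q \<and> y \<in> Q \<longrightarrow> x = y) \<and>
       (\<forall>P\<in>C. \<forall>Q\<in>C. \<forall>a\<in>I. \<forall>x\<in>Xs a. \<forall>y\<in>Xs a.
           x \<in> P \<and> y \<in> Q \<and> (x, y) \<in> R a \<longrightarrow> (P, Q) \<in> prec) \<and>
       (\<forall>P Q. (P, Q) \<in> prec \<longrightarrow> (\<forall>a\<in>I. \<forall>x\<in>Xs a. \<forall>y\<in>Xs a.
           x \<in> P \<and> y \<in> Q \<longrightarrow> (x, y) \<in> R a \<or> ((x, y) \<notin> R a \<and> (y, x) \<notin> R a))))"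

definition is_partition :: "'a set set \<Rightarrow> 'a set \<Rightarrow> bool" where
  "is_partition Part I \<longleftrightarrow> (\<forall>B\<in>Part. B \<noteq> {}) \<and> \<Union>Part = I \<and>
     (\<forall>B\<in>Part. \<forall>B'\<in>Part. B \<noteq> B' \<longrightarrow> B \<inter> B' = {})"

definition blockX :: "('a \<Rightarrow> 'v set) \<Rightarrow> 'a set \<Rightarrow> 'v set" where
  "blockX Xs B = (\<Union>a\<in>B. Xs a)"

definition quotZ :: "('a \<Rightarrow> 'v set) \<Rightarrow> 'v set set \<Rightarrow> 'a set \<Rightarrow> ('a set \<times> 'v set) set" where
  "quotZ Xs C B = {(B, Q \<inter> blockX Xs B) | Q. Q \<in> C \<and> Q \<inter> blockX Xs B \<noteq> {}}"

definition quotR :: "('a \<Rightarrow> 'v set) \<Rightarrow> 'v set set \<Rightarrow> ('v set \<times> 'v set) set \<Rightarrow> 'a set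
     \<Rightarrow> (('a set \<times> 'v set) \<times> ('a set \<times> 'v set)) set" where
  "quotR Xs C prec B = {((B, P \<inter> blockX Xs B), (B, Q \<inter> blockX Xs B)) | P Q.
      P \<in> C \<and> Q \<in> C \<and> P \<inter> blockX Xs B \<noteq> {} \<and> Q \<inter> blockX Xs B \<noteq> {} \<and> (P, Q) \<in> prec}"

definition quotE :: "('a \<Rightarrow> 'v set) \<Rightarrow> 'v set set \<Rightarrow> 'a set set \<Rightarrow> ('a set \<times> 'v set) set set" where
  "quotE Xs C Part = {{(B, Q \<inter> blockX Xs B), (B', Q \<inter> blockX Xs B')} | B B' Q.
      B \<in> Part \<and> B' \<in> Part \<and> B \<noteq> B' \<and> Q \<in> C \<and>
      Q \<inter> blockX Xs B \<noteq> {} \<and> Q \<inter> blockX Xs B' \<noteq> {}}"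

definition quotCol :: "('a \<Rightarrow> 'v set) \<Rightarrow> 'a set set \<Rightarrow> 'v set \<Rightarrow> ('a set \<times> 'v set) set" where
  "quotCol Xs Part Q = {(B, Q \<inter> blockX Xs B) | B. B \<in> Part \<and> Q \<inter> blockX Xs B \<noteq> {}}"

definition quotPrec :: "('a \<Rightarrow> 'v set) \<Rightarrow> 'a set set \<Rightarrow> ('v set \<times> 'v set) set
     \<Rightarrow> (('a set \<times> 'v set) set \<times> ('a set \<times> 'v set) set) set" where
  "quotPrec Xs Part prec = {(quotCol Xs Part P, quotCol Xs Part Q) | P Q. (P, Q) \<in> prec}"

end

theory Submission
  imports Defs
begin

text \<open>A column Q of (X,A) is determined by any nonempty trace Q \<inter> X_k, because columns are
  disjoint. Hence Q \<mapsto> Q/Part is injective; each Q/Part is a clique of the quotient graph, as its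
  elements lie in distinct blocks, and every quotient edge lies inside some Q/Part, so these sets are
  exactly the components. The quotient orders are induced by \<prec> itself.\<close>

lemma components_subset: "S \<in> components V E \<Longrightarrow> S \<subseteq> V"
  unfolding components_def by blast

lemma components_nonempty: "S \<in> components V E \<Longrightarrow> S \<noteq> {}"
  unfolding components_def by blast

lemma components_disjoint:
  assumes S: "S \<in> components V E" and T: "T \<in> components V E" and x: "x \<in> S" "x \<in> T"
  shows "S = T"
proof -
  have sym_reach: "sym ((adj V E)\<^sup>*)"
    by (rule sym_rtrancl) (auto simp: sym_def adj_def insert_commute)
  from S obtain s where s: "S = {y \<in> V. (s, y) \<in> (adj V E)\<^sup>*}" unfolding components_def by blast
  from T obtain t where t: "T = {y \<in> V. (t, y) \<in> (adj V E)\<^sup>*}" unfolding components_def by blast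
  have "(s, x) \<in> (adj V E)\<^sup>*" "(x, t) \<in> (adj V E)\<^sup>*"
    using x s t sym_reach by (auto dest: symD)
  then have "(s, t) \<in> (adj V E)\<^sup>*" "(t, s) \<in> (adj V E)\<^sup>*"
    using sym_reach by (auto intro: rtrancl_trans dest: symD)
  then show "S = T" unfolding s t by (auto intro: rtrancl_trans)
qed

lemma components_eqI:
  assumes cover: "\<Union>F = V" and nonempty: "\<And>S. S \<in> F \<Longrightarrow> S \<noteq> {}"
    and disjoint: "\<And>S T x. S \<in> F \<Longrightarrow> T \<in> F \<Longrightarrow> x \<in> S \<Longrightarrow> x \<in> T \<Longrightarrow> S = T"
    and clique: "\<And>S x y. S \<in> F \<Longrightarrow> x \<in> S \<Longrightarrow> y \<in> S \<Longrightarrow> x \<noteq> y \<Longrightarrow> {x, y} \<in> E"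
    and edge: "\<And>e. e \<in> E \<Longrightarrow> \<exists>S\<in>F. \<exists>x y. x \<in> S \<and> y \<in> S \<and> e = {x, y}"
  shows "components V E = F"
proof -
  have reach_closed: "y \<in> S" if S: "S \<in> F" "x \<in> S" and xy: "(x, y) \<in> (adj V E)\<^sup>*" for S x y
    using xy
  proof (induction rule: rtrancl_induct)
    case (step y z)
    then have "{y, z} \<in> E" by (simp add: adj_def)
    then obtain S' where "S' \<in> F" "y \<in> S'" "z \<in> S'"
      using edge by (fastforce simp: doubleton_eq_iff)
    with step S disjoint show ?case by blast
  qed (use S in simp)
  have reach_complete: "(x, y) \<in> (adj V E)\<^sup>*" if "S \<in> F" "x \<in> S" "y \<in> S" for S x y
  proof (cases "x = y")
    case False
    then have "(x, y) \<in> adj V E"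
      using that clique cover by (auto simp: adj_def)
    then show ?thesis by blast
  qed simp
  have block: "{y \<in> V. (x, y) \<in> (adj V E)\<^sup>*} = S" if "S \<in> F" "x \<in> S" for S x
    using that reach_closed reach_complete cover by blast
  show ?thesis
  proof
    show "components V E \<subseteq> F"
      unfolding components_def using block cover by blast
    show "F \<subseteq> components V E"
    proof
      fix S assume "S \<in> F"
      moreover obtain x where "x \<in> S" using \<open>S \<in> F\<close> nonempty by blast
      ultimately show "S \<in> components V E"
        using block cover unfolding components_def by blast
    qed
  qed
qed

lemma mem_quotCol:
  "x \<in> quotCol Xs Part Q \<longleftrightarrow> (\<exists>B\<in>Part. x = (B, Q \<inter> blockX Xs B) \<and> Q \<inter> blockX Xs B \<noteq> {})"
  unfolding quotCol_def by blast

lemma mem_quotCol_fst: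
  "x \<in> quotCol Xs Part Q \<Longrightarrow> fst x = B \<Longrightarrow> x = (B, Q \<inter> blockX Xs B) \<and> B \<in> Part \<and> Q \<inter> blockX Xs B \<noteq> {}"
  unfolding mem_quotCol by auto

lemma quotCol_eq_if_fst_eq:
  "x \<in> quotCol Xs Part Q \<Longrightarrow> y \<in> quotCol Xs Part Q \<Longrightarrow> fst x = fst y \<Longrightarrow> x = y"
  using mem_quotCol_fst by metis

lemma fst_quotZ: "x \<in> quotZ Xs C B \<Longrightarrow> fst x = B"
  unfolding quotZ_def by auto

lemma Union_quotCol: "\<Union>(quotCol Xs Part ` C) = (\<Union>B\<in>Part. quotZ Xs C B)"
  unfolding quotZ_def quotCol_def by blast

lemma quotE_if_mem_quotCol:
  assumes "Q \<in> C" "x \<in> quotCol Xs Part Q" "y \<in> quotCol Xs Part Q" "x \<noteq> y"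
  shows "{x, y} \<in> quotE Xs C Part"
proof -
  from assms(2,3) obtain B B' where
    "x = (B, Q \<inter> blockX Xs B)" "B \<in> Part" "Q \<inter> blockX Xs B \<noteq> {}"
    "y = (B', Q \<inter> blockX Xs B')" "B' \<in> Part" "Q \<inter> blockX Xs B' \<noteq> {}"
    unfolding mem_quotCol by blast
  with assms(1,4) show ?thesis
    unfolding quotE_def by blast
qed

lemma quotE_inside_quotCol:
  "e \<in> quotE Xs C Part \<Longrightarrow> \<exists>Q\<in>C. \<exists>x y. x \<in> quotCol Xs Part Q \<and> y \<in> quotCol Xs Part Q \<and> e = {x, y}"
  unfolding quotE_def mem_quotCol by blast

lemma mem_quotR:
  "(x, y) \<in> quotR Xs C prec B \<longleftrightarrow> (\<exists>P Q. P \<in> C \<and> Q \<in> C \<and> (P, Q) \<in> prec \<and>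
     P \<inter> blockX Xs B \<noteq> {} \<and> Q \<inter> blockX Xs B \<noteq> {} \<and>
     x = (B, P \<inter> blockX Xs B) \<and> y = (B, Q \<inter> blockX Xs B))"
  unfolding quotR_def by blast

lemma simple_graph_quotient: "simple_graph (\<Union>B\<in>Part. quotZ Xs C B) (quotE Xs C Part)"
  unfolding simple_graph_def
proof
  fix e assume "e \<in> quotE Xs C Part"
  then obtain B B' Q where e: "e = {(B, Q \<inter> blockX Xs B), (B', Q \<inter> blockX Xs B')}"
    and B: "B \<in> Part" "B' \<in> Part" "B \<noteq> B'"
    and Q: "Q \<in> C" "Q \<inter> blockX Xs B \<noteq> {}" "Q \<inter> blockX Xs B' \<noteq> {}"
    unfolding quotE_def by blast
  have "(B, Q \<inter> blockX Xs B) \<in> quotZ Xs C B" "(B', Q \<inter> blockX Xs B') \<in> quotZ Xs C B'"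
    using Q unfolding quotZ_def by blast+
  with B show "\<exists>x y. x \<noteq> y \<and> x \<in> (\<Union>B\<in>Part. quotZ Xs C B) \<and> y \<in> (\<Union>B\<in>Part. quotZ Xs C B) \<and> e = {x, y}"
    unfolding e by (intro exI[of _ "(B, Q \<inter> blockX Xs B)"] exI[of _ "(B', Q \<inter> blockX Xs B')"]) auto
qed

lemma quotR_mem_quotCol:
  assumes "(x, y) \<in> quotR Xs C prec B" "B \<in> Part"
  obtains P Q where "P \<in> C" "Q \<in> C" "(P, Q) \<in> prec"
    "x \<in> quotCol Xs Part P" "y \<in> quotCol Xs Part Q"
  using assms unfolding mem_quotR mem_quotCol by blast

locale column_partition =
  fixes Xs :: "'a \<Rightarrow> 'v set" and Part :: "'a set set" and C :: "'v set set"
  assumes column_nonempty: "Q \<in> C \<Longrightarrow> Q \<noteq> {}"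
    and columns_disjoint: "P \<in> C \<Longrightarrow> Q \<in> C \<Longrightarrow> x \<in> P \<Longrightarrow> x \<in> Q \<Longrightarrow> P = Q"
    and column_covered: "Q \<in> C \<Longrightarrow> Q \<subseteq> (\<Union>B\<in>Part. blockX Xs B)"
begin

lemma column_eq_if_traces_eq:
  "P \<in> C \<Longrightarrow> Q \<in> C \<Longrightarrow> P \<inter> Y = Q \<inter> Y \<Longrightarrow> P \<inter> Y \<noteq> {} \<Longrightarrow> P = Q"
  using columns_disjoint by blast

lemma quotCol_nonempty:
  assumes "Q \<in> C"
  shows "quotCol Xs Part Q \<noteq> {}"
proof -
  obtain x where "x \<in> Q" using column_nonempty[OF assms] by blast
  then obtain B where "B \<in> Part" "x \<in> blockX Xs B" using column_covered[OF assms] by blast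
  with \<open>x \<in> Q\<close> have "(B, Q \<inter> blockX Xs B) \<in> quotCol Xs Part Q"
    unfolding mem_quotCol by blast
  then show ?thesis by blast
qed

lemma quotCol_eq_if_meet:
  assumes "P \<in> C" "Q \<in> C" "x \<in> quotCol Xs Part P" "x \<in> quotCol Xs Part Q"
  shows "P = Q"
proof -
  obtain B where "x = (B, P \<inter> blockX Xs B)" "P \<inter> blockX Xs B \<noteq> {}"
    using assms(3) unfolding mem_quotCol by blast
  moreover have "x = (B, Q \<inter> blockX Xs B)"
    using mem_quotCol_fst[OF assms(4)] calculation by simp
  ultimately have "P \<inter> blockX Xs B = Q \<inter> blockX Xs B" "P \<inter> blockX Xs B \<noteq> {}"
    by simp_all
  then show ?thesis
    by (rule column_eq_if_traces_eq[OF assms(1,2)])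
qed

lemma inj_on_quotCol: "inj_on (quotCol Xs Part) C"
proof (rule inj_onI)
  fix P Q assume "P \<in> C" "Q \<in> C" "quotCol Xs Part P = quotCol Xs Part Q"
  moreover obtain x where "x \<in> quotCol Xs Part P"
    using quotCol_nonempty[OF \<open>P \<in> C\<close>] by blast
  ultimately show "P = Q"
    using quotCol_eq_if_meet by simp
qed

theorem components_quotient:
  "components (\<Union>B\<in>Part. quotZ Xs C B) (quotE Xs C Part) = quotCol Xs Part ` C"
proof (rule components_eqI)
  show "\<Union>(quotCol Xs Part ` C) = (\<Union>B\<in>Part. quotZ Xs C B)"
    by (rule Union_quotCol)
  show "S \<noteq> {}" if "S \<in> quotCol Xs Part ` C" for S
    using that quotCol_nonempty by blast
  show "S = T" if "S \<in> quotCol Xs Part ` C" "T \<in> quotCol Xs Part ` C" "x \<in> S" "x \<in> T" for S T x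
    using that quotCol_eq_if_meet by blast
  show "{x, y} \<in> quotE Xs C Part" if "S \<in> quotCol Xs Part ` C" "x \<in> S" "y \<in> S" "x \<noteq> y" for S x y
    using that quotE_if_mem_quotCol by blast
  show "\<exists>S\<in>quotCol Xs Part ` C. \<exists>x y. x \<in> S \<and> y \<in> S \<and> e = {x, y}" if "e \<in> quotE Xs C Part" for e
    using quotE_inside_quotCol[OF that] by blast
qed

lemma irrefl_quotR:
  assumes "irrefl prec"
  shows "irrefl (quotR Xs C prec B)"
proof (rule irreflI, rule notI)
  fix x assume "(x, x) \<in> quotR Xs C prec B"
  then obtain P Q where "P \<in> C" "Q \<in> C" "(P, Q) \<in> prec" "P \<inter> blockX Xs B \<noteq> {}"
    "(B, P \<inter> blockX Xs B) = (B, Q \<inter> blockX Xs B)"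
    unfolding mem_quotR by blast
  then have "P = Q"
    using column_eq_if_traces_eq by simp
  with \<open>(P, Q) \<in> prec\<close> assms show False
    by (simp add: irreflD)
qed

lemma trans_quotR:
  assumes "trans prec"
  shows "trans (quotR Xs C prec B)"
proof (rule transI)
  fix x y z assume "(x, y) \<in> quotR Xs C prec B" "(y, z) \<in> quotR Xs C prec B"
  then obtain P Q Q' T where
    PQ: "P \<in> C" "Q \<in> C" "x = (B, P \<inter> blockX Xs B)" "y = (B, Q \<inter> blockX Xs B)"
      "P \<inter> blockX Xs B \<noteq> {}" "Q \<inter> blockX Xs B \<noteq> {}" "(P, Q) \<in> prec" and
    Q'T: "Q' \<in> C" "T \<in> C" "y = (B, Q' \<inter> blockX Xs B)" "z = (B, T \<inter> blockX Xs B)"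
      "T \<inter> blockX Xs B \<noteq> {}" "(Q', T) \<in> prec"
    unfolding mem_quotR by blast
  have "Q \<inter> blockX Xs B = Q' \<inter> blockX Xs B"
    using PQ(4) Q'T(3) by simp
  then have "Q = Q'"
    using column_eq_if_traces_eq[OF PQ(2) Q'T(1)] PQ(6) by blast
  with assms PQ(7) Q'T(6) have "(P, T) \<in> prec"
    by (meson transD)
  with PQ Q'T show "(x, z) \<in> quotR Xs C prec B"
    unfolding mem_quotR by blast
qed

lemma poset_family_quotient:
  assumes "finite Part" "finite C" "irrefl prec" "trans prec"
  shows "poset_family Part (quotZ Xs C) (quotR Xs C prec)"
  unfolding poset_family_def
proof (intro conjI ballI allI)
  fix B
  have "quotZ Xs C B \<subseteq> (\<lambda>Q. (B, Q \<inter> blockX Xs B)) ` C"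
    unfolding quotZ_def by blast
  then show "finite (quotZ Xs C B)"
    by (rule finite_surj[OF assms(2)])
  show "quotZ Xs C B \<subseteq> {B} \<times> UNIV" "quotR Xs C prec B \<subseteq> quotZ Xs C B \<times> quotZ Xs C B"
    unfolding quotR_def quotZ_def by blast+
  show "(x, x) \<notin> quotR Xs C prec B" for x
    using irrefl_quotR[OF assms(3)] by (rule irreflD)
  show "trans (quotR Xs C prec B)"
    using trans_quotR[OF assms(4)] .
qed (rule assms(1))

lemma quotCol_eq_iff: "P \<in> C \<Longrightarrow> Q \<in> C \<Longrightarrow> quotCol Xs Part P = quotCol Xs Part Q \<longleftrightarrow> P = Q"
  using inj_on_quotCol by (rule inj_on_eq_iff)

lemma irrefl_quotPrec:
  assumes "prec \<subseteq> C \<times> C" "irrefl prec"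
  shows "irrefl (quotPrec Xs Part prec)"
proof (rule irreflI, rule notI)
  fix S assume "(S, S) \<in> quotPrec Xs Part prec"
  then obtain P Q where PQ: "(P, Q) \<in> prec" "quotCol Xs Part P = quotCol Xs Part Q"
    unfolding quotPrec_def by blast
  moreover have "P \<in> C" "Q \<in> C"
    using PQ(1) assms(1) by auto
  ultimately have "P = Q"
    using quotCol_eq_iff by simp
  with PQ(1) assms(2) show False
    by (simp add: irreflD)
qed

lemma trans_quotPrec:
  assumes "prec \<subseteq> C \<times> C" "trans prec"
  shows "trans (quotPrec Xs Part prec)"
proof (rule transI)
  fix x y z assume "(x, y) \<in> quotPrec Xs Part prec" "(y, z) \<in> quotPrec Xs Part prec"
  then obtain P Q Q' T where PQ: "(P, Q) \<in> prec" "(Q', T) \<in> prec"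
    "x = quotCol Xs Part P" "y = quotCol Xs Part Q" "y = quotCol Xs Part Q'" "z = quotCol Xs Part T"
    unfolding quotPrec_def by blast
  moreover have "Q \<in> C" "Q' \<in> C"
    using PQ(1,2) assms(1) by auto
  ultimately have "Q = Q'"
    using quotCol_eq_iff by simp
  with PQ(1,2) assms(2) have "(P, T) \<in> prec"
    by (meson transD)
  with PQ(3,6) show "(x, z) \<in> quotPrec Xs Part prec"
    unfolding quotPrec_def by blast
qed

lemma quotPrec_if_quotR:
  assumes "prec \<subseteq> C \<times> C" "P' \<in> quotCol Xs Part ` C" "Q' \<in> quotCol Xs Part ` C" "B \<in> Part"
    "x \<in> P'" "y \<in> Q'" "(x, y) \<in> quotR Xs C prec B"
  shows "(P', Q') \<in> quotPrec Xs Part prec"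
proof -
  obtain P0 Q0 where "P0 \<in> C" "Q0 \<in> C" "P' = quotCol Xs Part P0" "Q' = quotCol Xs Part Q0"
    using assms(2,3) by blast
  moreover obtain P Q where "P \<in> C" "Q \<in> C" "(P, Q) \<in> prec"
    "x \<in> quotCol Xs Part P" "y \<in> quotCol Xs Part Q"
    using quotR_mem_quotCol[OF assms(7,4)] .
  ultimately have "P0 = P" "Q0 = Q"
    using quotCol_eq_if_meet assms(5,6) by blast+
  with \<open>(P, Q) \<in> prec\<close> \<open>P' = quotCol Xs Part P0\<close> \<open>Q' = quotCol Xs Part Q0\<close> show ?thesis
    unfolding quotPrec_def by blast
qed

lemma quotR_if_quotPrec:
  assumes "prec \<subseteq> C \<times> C" "(P', Q') \<in> quotPrec Xs Part prec"
    "x \<in> quotZ Xs C B" "y \<in> quotZ Xs C B" "x \<in> P'" "y \<in> Q'"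
  shows "(x, y) \<in> quotR Xs C prec B"
proof -
  obtain P Q where "(P, Q) \<in> prec" "P' = quotCol Xs Part P" "Q' = quotCol Xs Part Q"
    using assms(2) unfolding quotPrec_def by blast
  moreover from calculation have "x = (B, P \<inter> blockX Xs B) \<and> B \<in> Part \<and> P \<inter> blockX Xs B \<noteq> {}"
    "y = (B, Q \<inter> blockX Xs B) \<and> B \<in> Part \<and> Q \<inter> blockX Xs B \<noteq> {}"
    using mem_quotCol_fst[of _ Xs Part _ B] fst_quotZ[of _ Xs C B] assms(3-6) by simp_all
  ultimately show ?thesis
    using assms(1) unfolding mem_quotR by blast
qed

theorem alignment_quotient:
  assumes "finite Part" "finite C" "prec \<subseteq> C \<times> C" "irrefl prec" "trans prec"
  shows "alignment Part (quotZ Xs C) (quotR Xs C prec) (quotE Xs C Part) (quotPrec Xs Part prec)"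
proof -
  let ?C' = "quotCol Xs Part ` C"
  have order: "quotPrec Xs Part prec \<subseteq> ?C' \<times> ?C'" "\<forall>Q. (Q, Q) \<notin> quotPrec Xs Part prec"
    "trans (quotPrec Xs Part prec)"
    using assms(3) irrefl_quotPrec[OF assms(3,4)] trans_quotPrec[OF assms(3,5)]
    unfolding quotPrec_def irrefl_def by blast+
  have P1: "\<forall>Q\<in>?C'. \<forall>x\<in>Q. \<forall>y\<in>Q. x \<noteq> y \<longrightarrow> {x, y} \<in> quotE Xs C Part"
    using quotE_if_mem_quotCol by blast
  have P2: "\<forall>Q\<in>?C'. \<forall>B\<in>Part. \<forall>x\<in>quotZ Xs C B. \<forall>y\<in>quotZ Xs C B. x \<in> Q \<and> y \<in> Q \<longrightarrow> x = y"
  proof (intro ballI impI)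
    fix S B x y assume "S \<in> ?C'" "x \<in> quotZ Xs C B" "y \<in> quotZ Xs C B" "x \<in> S \<and> y \<in> S"
    moreover from calculation have "fst x = fst y"
      using fst_quotZ by metis
    ultimately show "x = y"
      using quotCol_eq_if_fst_eq by blast
  qed
  have P3: "\<forall>P\<in>?C'. \<forall>Q\<in>?C'. \<forall>B\<in>Part. \<forall>x\<in>quotZ Xs C B. \<forall>y\<in>quotZ Xs C B.
      x \<in> P \<and> y \<in> Q \<and> (x, y) \<in> quotR Xs C prec B \<longrightarrow> (P, Q) \<in> quotPrec Xs Part prec"
    using quotPrec_if_quotR[OF assms(3)] by blast
  have P4: "\<forall>P Q. (P, Q) \<in> quotPrec Xs Part prec \<longrightarrow> (\<forall>B\<in>Part. \<forall>x\<in>quotZ Xs C B. \<forall>y\<in>quotZ Xs C B.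
      x \<in> P \<and> y \<in> Q \<longrightarrow> (x, y) \<in> quotR Xs C prec B
        \<or> ((x, y) \<notin> quotR Xs C prec B \<and> (y, x) \<notin> quotR Xs C prec B))"
    using quotR_if_quotPrec[OF assms(3)] by blast
  show ?thesis
    unfolding alignment_def Let_def components_quotient
    by (intro conjI poset_family_quotient[OF assms(1,2,4,5)] simple_graph_quotient order P1 P2 P3 P4)
qed

end

theorem lemma5:
  fixes I :: "'a set" and Xs :: "'a \<Rightarrow> ('a \<times> 'i) set"
    and R :: "'a \<Rightarrow> (('a \<times> 'i) \<times> ('a \<times> 'i)) set"
    and A :: "('a \<times> 'i) set set" and prec :: "(('a \<times> 'i) set \<times> ('a \<times> 'i) set) set"
    and Part :: "'a set set"
  assumes "alignment I Xs R A prec"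
    and "is_partition Part I"
  defines "C \<equiv> components (\<Union>a\<in>I. Xs a) A"
  shows "components (\<Union>B\<in>Part. quotZ Xs C B) (quotE Xs C Part) = quotCol Xs Part ` C
       \<and> inj_on (quotCol Xs Part) C
       \<and> alignment Part (quotZ Xs C) (quotR Xs C prec) (quotE Xs C Part) (quotPrec Xs Part prec)"
proof -
  have family: "poset_family I Xs R"
    using assms(1) by (simp add: alignment_def Let_def)
  have order: "prec \<subseteq> C \<times> C" "irrefl prec" "trans prec"
    using assms(1) by (simp_all add: alignment_def Let_def C_def irrefl_def)
  have finite_I: "finite I" and finite_X: "finite (\<Union>a\<in>I. Xs a)"
    using family by (simp_all add: poset_family_def)
  have blocks: "\<Union>Part = I" "(\<Union>B\<in>Part. blockX Xs B) = (\<Union>a\<in>I. Xs a)"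
    using assms(2) unfolding is_partition_def blockX_def by auto
  interpret column_partition Xs Part C
  proof
    show "Q \<noteq> {}" if "Q \<in> C" for Q
      using that unfolding C_def by (rule components_nonempty)
    show "P = Q" if "P \<in> C" "Q \<in> C" "x \<in> P" "x \<in> Q" for P Q x
      using that unfolding C_def by (rule components_disjoint)
    show "Q \<subseteq> (\<Union>B\<in>Part. blockX Xs B)" if "Q \<in> C" for Q
      using that blocks(2) unfolding C_def by (simp add: components_subset)
  qed
  have "finite Part"
    using finite_I blocks(1) by (metis finite_UnionD)
  moreover have "C \<subseteq> Pow (\<Union>a\<in>I. Xs a)"
    unfolding C_def by (auto dest: components_subset)
  then have "finite C"
    using finite_X by (meson finite_Pow_iff finite_subset)
  ultimately show ?thesis
    using components_quotient inj_on_quotCol alignment_quotient order by blast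
qed

end
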